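(* For every odd prime $p$, the graph $ER'(p)$ satisfies $\chi(ER'(p))\ge 4$.
   Context: $\chi$ denotes the chromatic number. Let $p$ be an odd prime and $m=(p-1)/2$. Let $V(ER'(p))$ be the set of nonzero integer vectors $x=(x_1,x_2,x_3)\in\{-m,\dots,-1,0,1,\dots,m\}^3$ whose first nonzero entry equals $1$ (equivalently: take the representatives $[0,0,1]$, $[0,1,a]$, $[1,a,b]$, $a,b\in\{0,\dots,p-1\}$, of the one-dimensional subspaces of $\mathbb{F}_p^3$, and replace every entry $x_i>m$ by $x_i-p$). The graph $ER'(p)$ has this vertex set, with two vertices adjacent iff they are orthogonal as vectors of $\mathbb{R}^3$ under the standard inner product. (For $p=3$, $ER'(3)$ is the 13-vertex orthogonality graph $G_{13}$ of the vectors in $\{0,\pm1\}^3$ with first nonzero entry $1$.) *)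

theory Defs
  imports Main "HOL-Computational_Algebra.Primes"
begin

type_synonym vec3 = "int \<times> int \<times> int"

definition first_nonzero_is_one :: "vec3 \<Rightarrow> bool" where
  "first_nonzero_is_one v = (case v of (a, b, c) \<Rightarrow>
      (if a \<noteq> 0 then a = 1 else if b \<noteq> 0 then b = 1 else c = 1))"

definition ERp_verts :: "nat \<Rightarrow> vec3 set" where
  "ERp_verts p = (let m = (int p - 1) div 2 in
     {(a, b, c). a \<in> {-m..m} \<and> b \<in> {-m..m} \<and> c \<in> {-m..m} \<and>
                 (a, b, c) \<noteq> (0, 0, 0) \<and> first_nonzero_is_one (a, b, c)})"

definition dot3 :: "vec3 \<Rightarrow> vec3 \<Rightarrow> int" where
  "dot3 u v = (case u of (a, b, c) \<Rightarrow> case v of (x, y, z) \<Rightarrow> a * x + b * y + c * z)"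

definition ERp_adj :: "nat \<Rightarrow> vec3 \<Rightarrow> vec3 \<Rightarrow> bool" where
  "ERp_adj p u v = (u \<in> ERp_verts p \<and> v \<in> ERp_verts p \<and> u \<noteq> v \<and> dot3 u v = 0)"

definition colorable :: "'a set \<Rightarrow> ('a \<Rightarrow> 'a \<Rightarrow> bool) \<Rightarrow> nat \<Rightarrow> bool" where
  "colorable V E k = (\<exists>f :: 'a \<Rightarrow> nat. (\<forall>v\<in>V. f v < k) \<and>
                        (\<forall>u\<in>V. \<forall>v\<in>V. E u v \<longrightarrow> f u \<noteq> f v))"

definition chromatic_number :: "'a set \<Rightarrow> ('a \<Rightarrow> 'a \<Rightarrow> bool) \<Rightarrow> nat" where
  "chromatic_number V E = (LEAST k. colorable V E k)"

end

theory Submission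
  imports Defs
begin

text \<open>
  For \<open>p \<ge> 3\<close> we have \<open>m \<ge> 1\<close>, so the thirteen vectors of \<open>{0,\<plusminus>1}\<^sup>3\<close> with first
  nonzero entry 1 are vertices of \<open>ER'(p)\<close>, and it suffices to show that the
  orthogonality graph \<open>G\<^sub>1\<^sub>3\<close> on them is not 3-colourable.
  In a 3-colouring, the orthogonal basis \<open>e\<^sub>1, e\<^sub>2, e\<^sub>3\<close> receives three distinct colours;
  the two face diagonals orthogonal to \<open>e\<^sub>i\<close> are orthogonal to each other and hence
  receive the two colours other than that of \<open>e\<^sub>i\<close>. Each of the four vectors \<open>(1,s,t)\<close>
  is orthogonal to one diagonal of each face, and whichever way the diagonals are
  coloured, one of these four vectors sees all three colours.
\<close>

lemma colorable_mono: "colorable V E j \<Longrightarrow> j \<le> k \<Longrightarrow> colorable V E k"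
  unfolding colorable_def by (blast intro: order_less_le_trans)

lemma colorable_card:
  assumes "finite V" and "\<And>v. v \<in> V \<Longrightarrow> \<not> E v v"
  shows "colorable V E (card V)"
proof -
  obtain g where "bij_betw g V {0..<card V}"
    using ex_bij_betw_finite_nat[OF assms(1)] by blast
  then have "\<forall>v\<in>V. g v < card V" and "inj_on g V"
    by (auto simp: bij_betw_def)
  with assms(2) show ?thesis
    unfolding colorable_def inj_on_def by blast
qed

lemma colorable_subgraph:
  assumes "colorable V E k" and "W \<subseteq> V"
    and "\<And>u v. u \<in> W \<Longrightarrow> v \<in> W \<Longrightarrow> E' u v \<Longrightarrow> E u v"
  shows "colorable W E' k"
  using assms unfolding colorable_def by blast

lemma chromatic_number_gt:
  assumes "colorable V E n" and "\<not> colorable V E k"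
  shows "k < chromatic_number V E"
proof (rule ccontr)
  assume "\<not> k < chromatic_number V E"
  moreover have "colorable V E (chromatic_number V E)"
    unfolding chromatic_number_def using assms(1) by (rule LeastI)
  ultimately show False
    using assms(2) colorable_mono by (meson not_less)
qed

lemma finite_ERp_verts: "finite (ERp_verts p)"
proof (rule finite_subset)
  let ?I = "{-((int p - 1) div 2)..(int p - 1) div 2}"
  show "ERp_verts p \<subseteq> ?I \<times> ?I \<times> ?I"
    unfolding ERp_verts_def Let_def by auto
qed auto

definition G13_verts :: "vec3 set" where
  "G13_verts = {(1,0,0), (0,1,0), (0,0,1), (0,1,1), (0,1,-1), (1,0,1), (1,0,-1), (1,1,0), (1,-1,0),
                (1,1,1), (1,1,-1), (1,-1,1), (1,-1,-1)}"

lemma G13_verts_subset_ERp_verts: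
  assumes "3 \<le> p"
  shows "G13_verts \<subseteq> ERp_verts p"
proof -
  from assms have "1 \<le> (int p - 1) div 2" by linarith
  then show ?thesis
    unfolding G13_verts_def ERp_verts_def Let_def by (simp add: first_nonzero_is_one_def)
qed

lemma G13_not_3_colorable: "\<not> colorable G13_verts (\<lambda>u v. u \<noteq> v \<and> dot3 u v = 0) 3"
proof
  assume "colorable G13_verts (\<lambda>u v. u \<noteq> v \<and> dot3 u v = 0) 3"
  then obtain f :: "vec3 \<Rightarrow> nat"
    where col: "\<And>v. v \<in> G13_verts \<Longrightarrow> f v < 3"
      and adj: "\<And>u v. u \<in> G13_verts \<Longrightarrow> v \<in> G13_verts \<Longrightarrow> u \<noteq> v \<Longrightarrow> dot3 u v = 0
                  \<Longrightarrow> f u \<noteq> f v"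
    unfolding colorable_def by blast
  define A B C where "A = f (1,0,0)" and "B = f (0,1,0)" and "C = f (0,0,1)"
  have palette: "f v = A \<or> f v = B \<or> f v = C" if "v \<in> G13_verts" for v
  proof -
    have "A < 3" "B < 3" "C < 3" "f v < 3" "A \<noteq> B" "A \<noteq> C" "B \<noteq> C"
      unfolding A_def B_def C_def using col[OF that] col adj
      by (simp_all add: G13_verts_def dot3_def)
    then show ?thesis by linarith
  qed
  have corner: "f (1,s,t) \<in> {A,B,C} - {f (0,1,-s*t), f (1,0,-t), f (1,-s,0)}"
    if "s \<in> {-1,1}" "t \<in> {-1,1}" for s t
    using that palette[of "(1,s,t)"]
      adj[of "(1,s,t)" "(0,1,-s*t)"] adj[of "(1,s,t)" "(1,0,-t)"] adj[of "(1,s,t)" "(1,-s,0)"]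
    by (auto simp: G13_verts_def dot3_def)
  have "f (0,1,1) = B \<and> f (0,1,-1) = C \<or> f (0,1,1) = C \<and> f (0,1,-1) = B"
    using palette[of "(0,1,1)"] palette[of "(0,1,-1)"]
      adj[of "(1,0,0)" "(0,1,1)"] adj[of "(1,0,0)" "(0,1,-1)"] adj[of "(0,1,1)" "(0,1,-1)"]
    by (auto simp: G13_verts_def dot3_def A_def)
  moreover have "f (1,0,1) = A \<and> f (1,0,-1) = C \<or> f (1,0,1) = C \<and> f (1,0,-1) = A"
    using palette[of "(1,0,1)"] palette[of "(1,0,-1)"]
      adj[of "(0,1,0)" "(1,0,1)"] adj[of "(0,1,0)" "(1,0,-1)"] adj[of "(1,0,1)" "(1,0,-1)"]
    by (auto simp: G13_verts_def dot3_def B_def)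
  moreover have "f (1,1,0) = A \<and> f (1,-1,0) = B \<or> f (1,1,0) = B \<and> f (1,-1,0) = A"
    using palette[of "(1,1,0)"] palette[of "(1,-1,0)"]
      adj[of "(0,0,1)" "(1,1,0)"] adj[of "(0,0,1)" "(1,-1,0)"] adj[of "(1,1,0)" "(1,-1,0)"]
    by (auto simp: G13_verts_def dot3_def C_def)
  ultimately show False
    using corner[of 1 1] corner[of 1 "-1"] corner[of "-1" 1] corner[of "-1" "-1"]
    by (elim disjE conjE) simp_all
qed

lemma ERp_not_3_colorable:
  assumes "3 \<le> p"
  shows "\<not> colorable (ERp_verts p) (ERp_adj p) 3"
proof
  assume "colorable (ERp_verts p) (ERp_adj p) 3"
  then have "colorable G13_verts (\<lambda>u v. u \<noteq> v \<and> dot3 u v = 0) 3"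
    by (rule colorable_subgraph)
      (use G13_verts_subset_ERp_verts[OF assms] in \<open>auto simp: ERp_adj_def\<close>)
  with G13_not_3_colorable show False ..
qed

lemma chromatic_number_ERp_ge_4:
  assumes "3 \<le> p"
  shows "4 \<le> chromatic_number (ERp_verts p) (ERp_adj p)"
proof -
  have "colorable (ERp_verts p) (ERp_adj p) (card (ERp_verts p))"
    by (rule colorable_card) (auto simp: finite_ERp_verts ERp_adj_def)
  then have "3 < chromatic_number (ERp_verts p) (ERp_adj p)"
    using ERp_not_3_colorable[OF assms] by (rule chromatic_number_gt)
  then show ?thesis by simp
qed

theorem mainTheorem5:
  fixes p :: nat
  assumes "prime p" and "odd p"
  shows "chromatic_number (ERp_verts p) (ERp_adj p) \<ge> 4"
proof -
  have "p \<noteq> 2" using assms(2) by auto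
  with prime_ge_2_nat[OF assms(1)] have "3 \<le> p" by linarith
  then show ?thesis by (rule chromatic_number_ERp_ge_4)
qed

end
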